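(* For any $\beta,c\ge0$, $N\in\mathbb N$ and $\mathfrak L\in\mathcal S^*$, the limits $$\widetilde G^{(1)}_N(\beta,c,\mathfrak L)=\lim_{R\to\infty}G^{(1)}_{N,R}(\beta,c,\mathfrak L)\quad\text{and}\quad\widetilde G^{(2)}_N(\beta,c,\mathfrak L)=\lim_{R\to\infty}G^{(2)}_{N,R}(\beta,c,\mathfrak L)$$ exist, and $\widetilde G^{(1)}_N(\beta,c,\cdot)$, $\widetilde G^{(2)}_N(\beta,c,\cdot)$ are continuous functions on $\mathcal S^*$ (with the topology of weak convergence).
   Context: Fix an integer $q\ge2$, $[q]=\{1,\dots,q\}$, $\pi_\lambda$ the Poisson($\lambda$) mass function. $[q]^{\mathbb N\times\mathbb N}$ is the (compact, product topology) set of $\mathcal T=(\tau^{(1)},\tau^{(2)},\dots)$ with each $\tau^{(r)}=(\tau^{(r)}_1,\tau^{(r)}_2,\dots)\in[q]^{\mathbb N}$. $\mathcal S^*$ is the set of Borel probability measures $\mathfrak L$ on $[q]^{\mathbb N\times\mathbb N}$ such that for every bijection $\pi$ of $\mathbb N$ moving finitely many points, (i) the law of $(\tau^{(1)}\circ\pi,\tau^{(2)}\circ\pi,\dots)$ equals $\mathfrak L$, where $(\tau\circ\pi)_n=\tau_{\pi(n)}$, and (ii) the law of $(\tau^{(\pi(1))},\tau^{(\pi(2))},\dots)$ equals $\mathfrak L$. Let $\boldsymbol I$ be random, independent of $\mathcal T$, with $|\boldsymbol I|\sim\pi_{cN}$ and, given $|\boldsymbol I|=k$, $I_1,\dots,I_k$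 i.i.d. uniform on $\{1,\dots,N\}$ (expectation $\widetilde{\mathbb E}_{N,c}$); $\widetilde H_N(\boldsymbol I,\tau,\sigma)=\sum_{i=1}^{|\boldsymbol I|}\delta(\tau_i,\sigma_{I_i})$ for $\sigma\in[q]^N$. For $R\in\mathbb N$: $$G^{(1)}_{N,R}(\beta,c,\mathfrak L)=\int\widetilde{\mathbb E}_{N,c}\Big[\frac1N\ln\sum_{r=1}^R\frac1R\sum_{\sigma\in[q]^N}e^{-\beta\widetilde H_N(\boldsymbol I,\tau^{(r)},\sigma)}\Big]d\mathfrak L(\mathcal T),$$ $$G^{(2)}_{N,R}(\beta,c,\mathfrak L)=\int\sum_{K=0}^\infty\frac{\pi_{cN/2}(K)}{N}\ln\Big(\sum_{r=1}^R\frac1R\exp\Big(-\beta\sum_{k=1}^K\delta(\tau^{(r)}_{2k-1},\tau^{(r)}_{2k})\Big)\Big)d\mathfrak L(\mathcal T).$$ *)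

theory Defs
  imports "HOL-Probability.Probability"
begin

text \<open>Configurations: \<T> is the function T with T r n = \<tau>^(r)_n (rows r, columns n,
  both indexed by nat = {0,1,2,...}, a relabelling of the paper's index set).
  The space [q]^(N x N) is the subset Qcfg q of the product space nat => nat => nat
  (product topology of discrete nat), which carries the subspace = product topology.\<close>

type_synonym cfg = "nat \<Rightarrow> nat \<Rightarrow> nat"

definition Qcfg :: "nat \<Rightarrow> cfg set" where
  "Qcfg q = {T. \<forall>r n. T r n \<in> {1..q}}"

definition prob_on_Q :: "nat \<Rightarrow> cfg measure \<Rightarrow> bool" where
  "prob_on_Q q L \<longleftrightarrow> prob_space L \<and> sets L = sets (restrict_space borel (Qcfg q))"

definition finitary_perm :: "(nat \<Rightarrow> nat) \<Rightarrow> bool" where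
  "finitary_perm \<pi> \<longleftrightarrow> bij \<pi> \<and> finite {n. \<pi> n \<noteq> n}"

definition Sstar :: "nat \<Rightarrow> cfg measure set" where
  "Sstar q = {L. prob_on_Q q L \<and>
     (\<forall>\<pi>. finitary_perm \<pi> \<longrightarrow>
        distr L L (\<lambda>T r n. T r (\<pi> n)) = L \<and> distr L L (\<lambda>T r. T (\<pi> r)) = L)}"

definition weak_topology :: "nat \<Rightarrow> cfg measure topology" where
  "weak_topology q = topology_generated_by
     {{L. (\<integral>T. f T \<partial>L) \<in> U} | f U.
        continuous_on (Qcfg q) f \<and> bounded (f ` Qcfg q) \<and> open (U :: real set)}"

definition poisson :: "real \<Rightarrow> nat \<Rightarrow> real" where
  "poisson m k = exp (- m) * m ^ k / fact k"

definition kdelta :: "nat \<Rightarrow> nat \<Rightarrow> real" where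
  "kdelta a b = (if a = b then 1 else 0)"

text \<open>H_N(I,\<tau>,\<sigma>) with |I| = k, I given as a function on {..<k} with values in {1..N},
  \<tau> indexed from 0 (\<tau>_i of the paper is \<tau> (i-1)), \<sigma> : {1..N} \<rightarrow> [q].\<close>
definition Hamil :: "nat \<Rightarrow> (nat \<Rightarrow> nat) \<Rightarrow> (nat \<Rightarrow> nat) \<Rightarrow> (nat \<Rightarrow> nat) \<Rightarrow> real" where
  "Hamil k I \<tau> \<sigma> = (\<Sum>i<k. kdelta (\<tau> i) (\<sigma> (I i)))"

text \<open>G^(1)_{N,R}: the expectation over I is \<Sum>_k \<pi>_{cN}(k) N^{-k} \<Sum>_{I \<in> [N]^k}.\<close>
definition G1 :: "nat \<Rightarrow> nat \<Rightarrow> nat \<Rightarrow> real \<Rightarrow> real \<Rightarrow> cfg measure \<Rightarrow> real" where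
  "G1 q N R \<beta> c L = (\<integral>T. (\<Sum>k. poisson (c * real N) k * (1 / real N ^ k) *
      (\<Sum>I \<in> PiE {..<k} (\<lambda>_. {1..N}).
         (1 / real N) * ln (\<Sum>r<R. (1 / real R) *
            (\<Sum>\<sigma> \<in> PiE {1..N} (\<lambda>_. {1..q}). exp (- \<beta> * Hamil k I (T r) \<sigma>))))) \<partial>L)"

text \<open>G^(2)_{N,R}; the pairs (\<tau>_{2k-1},\<tau>_{2k}), k=1..K, become (T r (2k), T r (2k+1)), k<K.\<close>
definition G2 :: "nat \<Rightarrow> nat \<Rightarrow> real \<Rightarrow> real \<Rightarrow> cfg measure \<Rightarrow> real" where
  "G2 N R \<beta> c L = (\<integral>T. (\<Sum>K. poisson (c * real N / 2) K / real N *
      ln (\<Sum>r<R. (1 / real R) *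
            exp (- \<beta> * (\<Sum>k<K. kdelta (T r (2 * k)) (T r (2 * k + 1)))))) \<partial>L)"

end

theory Submission
  imports Defs
begin

(*
  Both functionals have the form
    u_L(R) = \<integral> \<Sum>_k \<Sum>_{i \<in> A_k} w_k ln ((1/R) \<Sum>_{r<R} g_{k,i}(T r)) dL
  with 0 < a_k \<le> g_{k,i} \<le> b_k and L invariant under finite permutations of the rows.
  The mean over R+1 rows is the average of the R+1 leave-one-out means, so concavity of ln and
  exchangeability give u_L(R) \<le> u_L(R+1). For the means x, y over R \<le> R' rows,
  ln x \<ge> ln y + x/y - 1 - (x-y)^2/a^2, and exchangeability gives E[x/y] = 1 and
  E[(x-y)^2] = (E[g(T 0)^2] - E[g(T 0) g(T 1)]) (1/R - 1/R') \<le> (b^2 - a^2)/R.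
  Hence u_L(R') \<le> u_L(R) + C/R with C independent of L, so u_L(R) converges uniformly on S*.
  Each u_L(R) integrates a bounded continuous function of T, so it is weakly continuous in L,
  and so is the uniform limit.
*)

section \<open>Row-exchangeable laws\<close>

lemma Sstar_prob_space: "L \<in> Sstar q \<Longrightarrow> prob_space L"
  by (simp add: Sstar_def prob_on_Q_def)

lemma sets_Sstar: "L \<in> Sstar q \<Longrightarrow> sets L = sets (restrict_space borel (Qcfg q))"
  by (simp add: Sstar_def prob_on_Q_def)

lemma borel_measurable_Sstar:
  fixes F :: "cfg \<Rightarrow> real"
  assumes "F \<in> borel_measurable borel" "L \<in> Sstar q"
  shows "F \<in> borel_measurable L"
  using measurable_restrict_space1[OF assms(1)] measurable_cong_sets[OF sets_Sstar[OF assms(2)] refl]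
  by blast

lemma integrable_Sstar_bounded:
  fixes F :: "cfg \<Rightarrow> real"
  assumes "L \<in> Sstar q" "F \<in> borel_measurable borel" "\<And>T. \<bar>F T\<bar> \<le> B"
  shows "integrable L F"
  using assms
  by (intro finite_measure.integrable_const_bound[OF prob_space.finite_measure[OF Sstar_prob_space],
        of L q F B] borel_measurable_Sstar[of F L q]) auto

lemma finitary_perm_transpose: "finitary_perm (Transposition.transpose a b)"
proof -
  have "{n. Transposition.transpose a b n \<noteq> n} \<subseteq> {a, b}"
    by (auto simp: Transposition.transpose_def)
  then show ?thesis
    unfolding finitary_perm_def by (auto intro: finite_subset)
qed

lemma finitary_perm_comp:
  assumes "finitary_perm f" "finitary_perm g"
  shows "finitary_perm (f \<circ> g)"
proof -
  have "{n. (f \<circ> g) n \<noteq> n} \<subseteq> {n. f n \<noteq> n} \<union> {n. g n \<noteq> n}"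
    by auto
  then show ?thesis
    using assms unfolding finitary_perm_def by (auto intro: finite_subset bij_comp)
qed

lemma finitary_perm_pair:
  assumes "i \<noteq> (j::nat)"
  obtains \<pi> where "finitary_perm \<pi>" "\<pi> 0 = i" "\<pi> 1 = j"
proof
  let ?t = "Transposition.transpose 0 i"
  show "finitary_perm (?t \<circ> Transposition.transpose 1 (?t j))"
    by (intro finitary_perm_comp finitary_perm_transpose)
  show "(?t \<circ> Transposition.transpose 1 (?t j)) 1 = j"
    by simp
  have "?t j \<noteq> 0"
    using assms by (auto simp: Transposition.transpose_def)
  then show "(?t \<circ> Transposition.transpose 1 (?t j)) 0 = i"
    by (auto simp: Transposition.transpose_def)
qed

lemma permute_rows_measurable[measurable]: "(\<lambda>(T::cfg) r. T (\<pi> r)) \<in> borel_measurable borel"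
  by (intro borel_measurable_continuous_onI continuous_on_coordinatewise_then_product
      continuous_on_product_coordinates)

lemma integral_permute_rows:
  fixes F :: "cfg \<Rightarrow> real"
  assumes L: "L \<in> Sstar q" and \<pi>: "finitary_perm \<pi>" and F: "F \<in> borel_measurable borel"
  shows "(\<integral>T. F (\<lambda>r. T (\<pi> r)) \<partial>L) = (\<integral>T. F T \<partial>L)"
proof -
  let ?h = "\<lambda>(T::cfg) r. T (\<pi> r)"
  have "?h \<in> measurable (restrict_space borel (Qcfg q)) (restrict_space borel (Qcfg q))"
    by (rule measurable_restrict_space3[OF permute_rows_measurable]) (auto simp: Qcfg_def)
  then have h: "?h \<in> measurable L L"
    using measurable_cong_sets[OF sets_Sstar[OF L] sets_Sstar[OF L]] by blast
  have "(\<integral>T. F T \<partial>L) = (\<integral>T. F T \<partial>(distr L L ?h))"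
    using L \<pi> unfolding Sstar_def by simp
  also have "\<dots> = (\<integral>T. F (?h T) \<partial>L)"
    by (rule integral_distr[OF h borel_measurable_Sstar[OF F L]])
  finally show ?thesis by simp
qed

lemma ln_le_tangent:
  fixes y m :: real
  assumes "0 < y" "0 < m"
  shows "ln y \<le> ln m + y / m - 1"
  using ln_le_minus_one[of "y / m"] assms by (simp add: ln_div)

lemma ln_ge_second_order:
  fixes x y a :: real
  assumes a: "0 < a" and x: "a \<le> x" and y: "a \<le> y"
  shows "ln y + x / y - 1 - (x - y)\<^sup>2 / a\<^sup>2 \<le> ln x"
proof -
  have pos: "0 < x" "0 < y" using a x y by auto
  have "ln y + (x - y) / x \<le> ln x"
    using ln_le_tangent[of y x] pos by (simp add: field_simps)
  moreover have "(x - y) / x = x / y - 1 - (x - y)\<^sup>2 / (x * y)"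
    using pos by (simp add: field_simps power2_eq_square)
  moreover have "(x - y)\<^sup>2 / (x * y) \<le> (x - y)\<^sup>2 / a\<^sup>2"
    using a pos x y by (intro divide_left_mono) (auto simp: power2_eq_square mult_mono)
  ultimately show ?thesis by linarith
qed

lemma sum_transpose_last:
  fixes X :: "nat \<Rightarrow> real"
  assumes "j < Suc R"
  shows "(\<Sum>r<R. X (Transposition.transpose j R r)) = (\<Sum>r<Suc R. X r) - X j"
proof -
  have "Transposition.transpose j R permutes {..<Suc R}"
    using assms by (intro permutes_swap_id) auto
  from sum.permute[OF this, of X] show ?thesis
    by (simp add: comp_def)
qed

lemma ln_mean_leave_one_out:
  fixes X :: "nat \<Rightarrow> real"
  assumes R: "1 \<le> R" and a: "0 < a" and Xa: "\<And>r. a \<le> X r"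
  shows "(1 / real (Suc R)) * (\<Sum>j<Suc R. ln (\<Sum>r<R. 1 / real R * X (Transposition.transpose j R r)))
         \<le> ln (\<Sum>r<Suc R. 1 / real (Suc R) * X r)"
proof -
  define S where "S = (\<Sum>r<Suc R. X r)"
  define m where "m = S / real (Suc R)"
  define Y where "Y j = (S - X j) / real R" for j
  have "real (Suc R) * a \<le> S"
    unfolding S_def using sum_mono[of "{..<Suc R}" "\<lambda>_. a" X] Xa by simp
  moreover have "0 < real (Suc R) * a"
    using a by simp
  ultimately have m: "0 < m"
    unfolding m_def by simp
  have Y: "(\<Sum>r<R. 1 / real R * X (Transposition.transpose j R r)) = Y j" if "j < Suc R" for j
    using sum_transpose_last[OF that, of X]
    unfolding Y_def S_def by (simp add: sum_divide_distrib[symmetric])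
  have Ypos: "0 < Y j" if "j < Suc R" for j
  proof -
    have "real R * a \<le> (\<Sum>r<R. X (Transposition.transpose j R r))"
      using sum_mono[of "{..<R}" "\<lambda>_. a"] Xa by simp
    moreover have "0 < real R * a"
      using R a by simp
    ultimately show ?thesis
      using sum_transpose_last[OF that, of X] R unfolding Y_def S_def by simp
  qed
  have sumY: "(\<Sum>j<Suc R. Y j) = S"
  proof -
    have "(\<Sum>j<Suc R. Y j) = (real (Suc R) * S - S) / real R"
      unfolding Y_def by (simp add: sum_divide_distrib[symmetric] sum_subtractf S_def)
    then show ?thesis using R by (simp add: field_simps)
  qed
  have "(\<Sum>j<Suc R. ln (Y j)) \<le> (\<Sum>j<Suc R. ln m + Y j / m - 1)"
    by (intro sum_mono ln_le_tangent Ypos m) simp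
  also have "\<dots> = real (Suc R) * ln m + S / m - real (Suc R)"
    by (simp add: sum.distrib sum_subtractf sum_divide_distrib[symmetric] sumY del: sum.lessThan_Suc)
  also have "\<dots> = real (Suc R) * ln m"
    using m unfolding m_def by (simp add: field_simps)
  finally have "(\<Sum>j<Suc R. ln (Y j)) \<le> real (Suc R) * ln m" .
  moreover have "(\<Sum>r<Suc R. 1 / real (Suc R) * X r) = m"
    unfolding m_def S_def by (simp add: sum_divide_distrib del: sum.lessThan_Suc)
  ultimately show ?thesis
    using Y by (simp add: field_simps del: sum.lessThan_Suc)
qed

lemma sum_sum_if_eq:
  fixes t s :: real
  shows "(\<Sum>i<m. \<Sum>j<n. if i = j then t else s) = real (min m n) * (t - s) + real m * real n * s"
proof -
  have "(\<Sum>j<n. if i = j then t else s) = (\<Sum>j<n. (if i = j then t - s else 0) + s)" for i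
    by (intro sum.cong) auto
  then have inner: "(\<Sum>j<n. if i = j then t else s) = (if i < n then t - s else 0) + real n * s" for i
    by (simp add: sum.distrib)
  have "{..<m} \<inter> {..<n} = {..<min m n}"
    by auto
  then have "card ({..<m} \<inter> {..<n}) = min m n"
    by simp
  then have "(\<Sum>i<m. if i < n then t - s else 0) = real (min m n) * (t - s)"
    by (simp add: sum.If_cases lessThan_def)
  then show ?thesis by (simp add: inner sum.distrib)
qed

section \<open>Means of a bounded row functional\<close>

definition row_mean :: "((nat \<Rightarrow> nat) \<Rightarrow> real) \<Rightarrow> nat \<Rightarrow> cfg \<Rightarrow> real" where
  "row_mean g R T = (\<Sum>r<R. 1 / real R * g (T r))"

lemma row_mean_bounds:
  assumes "1 \<le> R" "\<And>\<tau>. a \<le> g \<tau>" "\<And>\<tau>. g \<tau> \<le> b"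
  shows "a \<le> row_mean g R T" "row_mean g R T \<le> b"
proof -
  have "(\<Sum>r<R. 1 / real R * a) \<le> row_mean g R T"
    unfolding row_mean_def using assms(2) by (intro sum_mono mult_left_mono) auto
  moreover have "row_mean g R T \<le> (\<Sum>r<R. 1 / real R * b)"
    unfolding row_mean_def using assms(3) by (intro sum_mono mult_left_mono) auto
  ultimately show "a \<le> row_mean g R T" "row_mean g R T \<le> b"
    using assms(1) by simp_all
qed

lemma abs_ln_row_mean_le:
  assumes "0 < a" "\<And>\<tau>. a \<le> g \<tau>" "\<And>\<tau>. g \<tau> \<le> b"
  shows "\<bar>ln (row_mean g R T)\<bar> \<le> \<bar>ln a\<bar> + \<bar>ln b\<bar>"
proof (cases "R = 0")
  case False
  then have "a \<le> row_mean g R T" "row_mean g R T \<le> b"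
    using row_mean_bounds[of R a g b T] assms by auto
  then have "ln a \<le> ln (row_mean g R T)" "ln (row_mean g R T) \<le> ln b"
    using assms(1) by auto
  then show ?thesis by linarith
qed (simp add: row_mean_def)

lemma continuous_on_row_mean:
  assumes "continuous_on UNIV g"
  shows "continuous_on UNIV (row_mean g R)"
proof -
  have "continuous_on UNIV (\<lambda>T::cfg. g (T r))" for r
    by (rule continuous_on_compose2[OF assms continuous_on_product_coordinates]) simp
  then show ?thesis
    unfolding row_mean_def by (intro continuous_on_sum continuous_on_mult continuous_on_const)
qed

locale bounded_row_functional =
  fixes q :: nat and L :: "cfg measure" and g :: "(nat \<Rightarrow> nat) \<Rightarrow> real" and a b :: real
  assumes L: "L \<in> Sstar q" and continuous_g: "continuous_on UNIV g" and a_pos: "0 < a"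
    and g_ge: "\<And>\<tau>. a \<le> g \<tau>" and g_le: "\<And>\<tau>. g \<tau> \<le> b"
begin

lemma g_pos: "0 < g \<tau>"
  using a_pos g_ge[of \<tau>] by linarith

lemma row_measurable[measurable]: "(\<lambda>T::cfg. g (T i)) \<in> borel_measurable borel"
  by (intro borel_measurable_continuous_onI continuous_on_compose2[OF continuous_g]
      continuous_on_product_coordinates) simp

lemma row_mean_in_bounds:
  assumes "1 \<le> R"
  shows "a \<le> row_mean g R T" "row_mean g R T \<le> b"
  using row_mean_bounds[of R a g b T] assms g_ge g_le by auto

lemma row_mean_measurable[measurable]: "row_mean g R \<in> borel_measurable borel"
  by (intro borel_measurable_continuous_onI continuous_on_row_mean continuous_g)

lemma integrable_ln_row_mean: "integrable L (\<lambda>T. ln (row_mean g R T))"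
  by (rule integrable_Sstar_bounded[OF L _ abs_ln_row_mean_le[OF a_pos g_ge g_le]]) measurable

definition mean_log :: "nat \<Rightarrow> real" where
  "mean_log R = (\<integral>T. ln (row_mean g R T) \<partial>L)"

lemma mean_log_mono:
  assumes R: "1 \<le> R"
  shows "mean_log R \<le> mean_log (Suc R)"
proof -
  let ?t = "\<lambda>j. Transposition.transpose j R"
  let ?F = "\<lambda>j (T::cfg). ln (row_mean g R (\<lambda>r. T (?t j r)))"
  have integrable: "integrable L (?F j)" for j
    by (rule integrable_Sstar_bounded[OF L _ abs_ln_row_mean_le[OF a_pos g_ge g_le]]) measurable
  have "mean_log R = (\<integral>T. ?F j T \<partial>L)" for j
    unfolding mean_log_def
    by (rule integral_permute_rows[OF L finitary_perm_transpose, symmetric]) measurable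
  then have "mean_log R = (1 / real (Suc R)) * (\<Sum>j<Suc R. (\<integral>T. ?F j T \<partial>L))"
    by (simp del: sum.lessThan_Suc)
  also have "\<dots> = (\<integral>T. (1 / real (Suc R)) * (\<Sum>j<Suc R. ?F j T) \<partial>L)"
    using integrable by (simp add: integral_sum del: sum.lessThan_Suc)
  also have "\<dots> \<le> (\<integral>T. ln (row_mean g (Suc R) T) \<partial>L)"
  proof (intro integral_mono integrable_ln_row_mean)
    show "integrable L (\<lambda>T. 1 / real (Suc R) * (\<Sum>j<Suc R. ?F j T))"
      using integrable by (intro integrable_mult_right Bochner_Integration.integrable_sum)
    show "1 / real (Suc R) * (\<Sum>j<Suc R. ?F j T) \<le> ln (row_mean g (Suc R) T)" for T
      unfolding row_mean_def by (rule ln_mean_leave_one_out[OF R a_pos, of "\<lambda>r. g (T r)"]) (rule g_ge)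
  qed
  finally show ?thesis
    unfolding mean_log_def .
qed

lemma integral_row_ratio:
  assumes "i < R"
  shows "(\<integral>T. g (T i) / row_mean g R T \<partial>L) = 1"
proof -
  have R: "1 \<le> R" using assms by simp
  define h where "h j T = g (T j) / row_mean g R T" for j :: nat and T :: cfg
  have h_measurable[measurable]: "h j \<in> borel_measurable borel" for j
    unfolding h_def by measurable
  have "\<bar>h j T\<bar> \<le> b / a" for j T
    unfolding h_def using row_mean_in_bounds[OF R, of T] g_le[of "T j"] g_pos[of "T j"] a_pos
    by (simp add: frac_le)
  then have integrable: "integrable L (h j)" for j
    by (rule integrable_Sstar_bounded[OF L h_measurable])
  have symmetric: "(\<integral>T. h j T \<partial>L) = (\<integral>T. h 0 T \<partial>L)" if "j < R" for j
  proof -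
    let ?t = "Transposition.transpose 0 j"
    have "?t permutes {..<R}"
      using that R by (intro permutes_swap_id) auto
    have "row_mean g R (\<lambda>r. T (?t r)) = row_mean g R T" for T :: cfg
      using sum.permute[OF \<open>?t permutes {..<R}\<close>, of "\<lambda>r. 1 / real R * g (T r)"]
      unfolding row_mean_def by (simp add: comp_def)
    then have "h 0 (\<lambda>r. T (?t r)) = h j T" for T
      unfolding h_def by simp
    then show ?thesis
      using integral_permute_rows[OF L finitary_perm_transpose[of 0 j] h_measurable[of 0]] by simp
  qed
  have "(\<Sum>j<R. 1 / real R * h j T) = row_mean g R T / row_mean g R T" for T
    unfolding h_def times_divide_eq_right sum_divide_distrib[symmetric] row_mean_def ..
  then have "(\<Sum>j<R. 1 / real R * h j T) = 1" for T
    using row_mean_in_bounds(1)[OF R, of T] a_pos by simp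
  then have "1 = (\<integral>T. (\<Sum>j<R. 1 / real R * h j T) \<partial>L)"
    using prob_space.prob_space[OF Sstar_prob_space[OF L]] by simp
  also have "\<dots> = (\<Sum>j<R. 1 / real R * (\<integral>T. h j T \<partial>L))"
    using integrable by (simp add: integral_sum)
  also have "\<dots> = (\<Sum>j<R. 1 / real R * (\<integral>T. h i T \<partial>L))"
    using symmetric symmetric[OF assms]
    by (intro sum.cong refl arg_cong[where f = "\<lambda>z. 1 / real R * z"]) (metis lessThan_iff)
  also have "\<dots> = (\<integral>T. h i T \<partial>L)"
    using R by simp
  finally show ?thesis
    unfolding h_def by simp
qed

lemma integral_row_mean_ratio:
  assumes "1 \<le> R" "R \<le> R'"
  shows "(\<integral>T. row_mean g R T / row_mean g R' T \<partial>L) = 1"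
proof -
  let ?h = "\<lambda>i T. g (T i) / row_mean g R' T"
  have "integrable L (?h i)" for i
  proof (rule integrable_Sstar_bounded[OF L])
    show "\<bar>?h i T\<bar> \<le> b / a" for T
      using row_mean_in_bounds(1)[of R' T] assms g_le[of "T i"] g_pos[of "T i"] a_pos
      by (simp add: frac_le)
  qed measurable
  then have "(\<integral>T. (\<Sum>i<R. ?h i T) \<partial>L) = (\<Sum>i<R. \<integral>T. ?h i T \<partial>L)"
    by (simp add: integral_sum)
  also have "\<dots> = real R"
    using assms integral_row_ratio by simp
  finally have "(\<integral>T. (\<Sum>i<R. ?h i T) / real R \<partial>L) = 1"
    using assms by (simp only: integral_divide_zero) simp
  moreover have "(\<lambda>T. row_mean g R T / row_mean g R' T) = (\<lambda>T. (\<Sum>i<R. ?h i T) / real R)"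
    unfolding row_mean_def[of g R] by (simp add: fun_eq_iff sum_divide_distrib mult.commute)
  ultimately show ?thesis
    by (simp only:)
qed

lemma integral_row_product:
  "(\<integral>T. g (T i) * g (T j) \<partial>L)
     = (if i = j then (\<integral>T. g (T 0) * g (T 0) \<partial>L) else (\<integral>T. g (T 0) * g (T 1) \<partial>L))"
proof (cases "i = j")
  case True
  have "(\<integral>T. g (T (Transposition.transpose 0 i 0)) * g (T (Transposition.transpose 0 i 0)) \<partial>L)
      = (\<integral>T. g (T 0) * g (T 0) \<partial>L)"
    using integral_permute_rows[OF L finitary_perm_transpose, of "\<lambda>T. g (T 0) * g (T 0)" 0 i] by simp
  then show ?thesis
    using True by simp
next
  case False
  then obtain \<pi> where \<pi>: "finitary_perm \<pi>" "\<pi> 0 = i" "\<pi> 1 = j"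
    by (rule finitary_perm_pair)
  have "(\<integral>T. g (T (\<pi> 0)) * g (T (\<pi> 1)) \<partial>L) = (\<integral>T. g (T 0) * g (T 1) \<partial>L)"
    using integral_permute_rows[OF L \<pi>(1), of "\<lambda>T. g (T 0) * g (T 1)"] by simp
  then show ?thesis
    using False \<pi> by simp
qed

lemma a_le_b: "a \<le> b"
  using g_ge g_le order_trans by blast

lemma b_pos: "0 < b"
  using a_pos a_le_b by linarith

lemma abs_row_product_le: "\<bar>g (T i) * g (T j)\<bar> \<le> b * b"
proof -
  have "\<bar>g (T i) * g (T j)\<bar> = g (T i) * g (T j)"
    using g_pos[of "T i"] g_pos[of "T j"] by (simp add: abs_mult)
  also have "\<dots> \<le> b * b"
    using g_le g_pos b_pos by (intro mult_mono) (auto intro: less_imp_le)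
  finally show ?thesis .
qed

lemma integrable_row_product: "integrable L (\<lambda>T. g (T i) * g (T j))"
  by (rule integrable_Sstar_bounded[OF L _ abs_row_product_le]) measurable

lemma integral_row_mean_product:
  assumes "1 \<le> m" "1 \<le> n"
  shows "(\<integral>T. row_mean g m T * row_mean g n T \<partial>L)
    = ((\<integral>T. g (T 0) * g (T 0) \<partial>L) - (\<integral>T. g (T 0) * g (T 1) \<partial>L)) / real (max m n)
      + (\<integral>T. g (T 0) * g (T 1) \<partial>L)"
proof -
  let ?t = "\<integral>T. g (T 0) * g (T 0) \<partial>L" and ?s = "\<integral>T. g (T 0) * g (T 1) \<partial>L"
  let ?c = "1 / real m * (1 / real n)"
  have "row_mean g m T * row_mean g n T = (\<Sum>i<m. \<Sum>j<n. ?c * (g (T i) * g (T j)))" for T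
    unfolding row_mean_def by (simp add: sum_product mult_ac)
  then have "(\<integral>T. row_mean g m T * row_mean g n T \<partial>L)
      = (\<Sum>i<m. \<Sum>j<n. ?c * (\<integral>T. g (T i) * g (T j) \<partial>L))"
    using integrable_row_product by (simp add: integral_sum)
  also have "\<dots> = (\<Sum>i<m. \<Sum>j<n. ?c * (if i = j then ?t else ?s))"
    by (intro sum.cong refl arg_cong[where f = "\<lambda>z. ?c * z"] integral_row_product)
  also have "\<dots> = ?c * (\<Sum>i<m. \<Sum>j<n. if i = j then ?t else ?s)"
    by (simp add: sum_distrib_left)
  also have "\<dots> = ?c * (real (min m n) * (?t - ?s) + real m * real n * ?s)"
    by (simp add: sum_sum_if_eq)
  also have "\<dots> = (?t - ?s) / real (max m n) + ?s"
    using assms by (cases "m \<le> n") (simp_all add: min_def max_def field_simps)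
  finally show ?thesis .
qed

lemma integral_sq_row_mean_diff:
  assumes R: "1 \<le> R" and RR: "R \<le> R'"
  shows "(\<integral>T. (row_mean g R T - row_mean g R' T)\<^sup>2 \<partial>L) \<le> (b\<^sup>2 - a\<^sup>2) / real R"
proof -
  let ?t = "\<integral>T. g (T 0) * g (T 0) \<partial>L" and ?s = "\<integral>T. g (T 0) * g (T 1) \<partial>L"
  let ?x = "row_mean g R" and ?y = "row_mean g R'"
  have R': "1 \<le> R'" using R RR by simp
  have prob: "prob_space L" by (rule Sstar_prob_space[OF L])
  have integrable: "integrable L (\<lambda>T. row_mean g m T * row_mean g n T)" if "1 \<le> m" "1 \<le> n" for m n
  proof (rule integrable_Sstar_bounded[OF L])
    show "\<bar>row_mean g m T * row_mean g n T\<bar> \<le> b * b" for T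
      using row_mean_in_bounds[OF that(1), of T] row_mean_in_bounds[OF that(2), of T] a_pos
      by (simp add: abs_mult mult_mono)
  qed measurable
  have "(\<lambda>T. (?x T - ?y T)\<^sup>2) = (\<lambda>T. ?x T * ?x T - 2 * (?x T * ?y T) + ?y T * ?y T)"
    by (simp add: power2_eq_square algebra_simps)
  then have "(\<integral>T. (?x T - ?y T)\<^sup>2 \<partial>L)
      = (\<integral>T. ?x T * ?x T \<partial>L) - 2 * (\<integral>T. ?x T * ?y T \<partial>L) + (\<integral>T. ?y T * ?y T \<partial>L)"
    using integrable[OF R R] integrable[OF R R'] integrable[OF R' R'] by simp
  also have "\<dots> = (?t - ?s) * (1 / real R - 1 / real R')"
    using R R' RR by (simp add: integral_row_mean_product max_def field_simps)
  also have "\<dots> \<le> (b\<^sup>2 - a\<^sup>2) * (1 / real R - 1 / real R')"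
  proof (rule mult_right_mono)
    have "?t \<le> b\<^sup>2"
      using abs_le_D1[OF abs_row_product_le]
      by (intro prob_space.integral_le_const[OF prob integrable_row_product] AE_I2)
         (simp add: power2_eq_square)
    moreover have "a\<^sup>2 \<le> ?s"
      by (intro prob_space.integral_ge_const[OF prob integrable_row_product] AE_I2)
         (simp add: power2_eq_square, intro mult_mono g_ge less_imp_le g_pos a_pos)
    ultimately show "?t - ?s \<le> b\<^sup>2 - a\<^sup>2" by simp
    show "0 \<le> 1 / real R - 1 / real R'"
      using R RR by (simp add: frac_le)
  qed
  also have "\<dots> \<le> (b\<^sup>2 - a\<^sup>2) * (1 / real R)"
    using a_le_b a_pos by (intro mult_left_mono) (auto simp: power_mono)
  finally show ?thesis by simp
qed

lemma mean_log_le: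
  assumes R: "1 \<le> R" and RR: "R \<le> R'"
  shows "mean_log R' \<le> mean_log R + (b\<^sup>2 - a\<^sup>2) / (a\<^sup>2 * real R)"
proof -
  have R': "1 \<le> R'" using R RR by simp
  let ?x = "row_mean g R" and ?y = "row_mean g R'"
  have prob: "prob_space L" by (rule Sstar_prob_space[OF L])
  have bounds: "a \<le> ?x T" "?x T \<le> b" "a \<le> ?y T" "?y T \<le> b" for T
    using row_mean_in_bounds[OF R] row_mean_in_bounds[OF R'] by auto
  have integrable_ratio: "integrable L (\<lambda>T. ?x T / ?y T)"
  proof (rule integrable_Sstar_bounded[OF L])
    show "\<bar>?x T / ?y T\<bar> \<le> b / a" for T
      using bounds[of T] a_pos by (simp add: frac_le)
  qed measurable
  have integrable_sq: "integrable L (\<lambda>T. (?x T - ?y T)\<^sup>2)"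
  proof (rule integrable_Sstar_bounded[OF L])
    fix T
    have "\<bar>?x T - ?y T\<bar> \<le> b - a"
      using bounds[of T] by (simp add: abs_le_iff)
    then have "\<bar>?x T - ?y T\<bar>\<^sup>2 \<le> (b - a)\<^sup>2"
      by (rule power_mono) simp
    then show "\<bar>(?x T - ?y T)\<^sup>2\<bar> \<le> (b - a)\<^sup>2"
      by simp
  qed measurable
  note integrable = integrable_ln_row_mean integrable_ratio integrable_sq finite_measure.integrable_const[OF prob_space.finite_measure[OF prob], of "1::real"]
  have "(\<integral>T. ln (?y T) + ?x T / ?y T - 1 - (?x T - ?y T)\<^sup>2 / a\<^sup>2 \<partial>L) \<le> mean_log R"
    unfolding mean_log_def
  proof (rule integral_mono)
    show "integrable L (\<lambda>T. ln (?y T) + ?x T / ?y T - 1 - (?x T - ?y T)\<^sup>2 / a\<^sup>2)"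
      by (intro Bochner_Integration.integrable_diff Bochner_Integration.integrable_add
          integrable_divide integrable)
    show "ln (?y T) + ?x T / ?y T - 1 - (?x T - ?y T)\<^sup>2 / a\<^sup>2 \<le> ln (?x T)" for T
      by (rule ln_ge_second_order[OF a_pos bounds(1) bounds(3)])
  qed (rule integrable_ln_row_mean)
  moreover have "(\<integral>T. ln (?y T) + ?x T / ?y T - 1 - (?x T - ?y T)\<^sup>2 / a\<^sup>2 \<partial>L)
      = mean_log R' - (\<integral>T. (?x T - ?y T)\<^sup>2 \<partial>L) / a\<^sup>2"
    unfolding mean_log_def
    using integrable integral_row_mean_ratio[OF R RR] prob_space.prob_space[OF prob] by simp
  moreover have "(\<integral>T. (?x T - ?y T)\<^sup>2 \<partial>L) / a\<^sup>2 \<le> (b\<^sup>2 - a\<^sup>2) / (a\<^sup>2 * real R)"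
    using divide_right_mono[OF integral_sq_row_mean_diff[OF R RR], of "a\<^sup>2"]
    by (simp add: mult.commute)
  ultimately show ?thesis by linarith
qed

end

section \<open>Convergence with a uniform rate\<close>

lemma convergent_mono_rate:
  fixes u :: "nat \<Rightarrow> real"
  assumes mono: "\<And>R. 1 \<le> R \<Longrightarrow> u R \<le> u (Suc R)"
    and rate: "\<And>R R'. 1 \<le> R \<Longrightarrow> R \<le> R' \<Longrightarrow> u R' \<le> u R + E / real R"
  shows "convergent u" "\<And>R. 1 \<le> R \<Longrightarrow> \<bar>lim u - u R\<bar> \<le> E / real R"
proof -
  have inc: "incseq (\<lambda>n. u (Suc n))"
    by (rule incseq_SucI) (simp add: mono)
  have "u (Suc n) \<le> u 1 + E" for n
    using rate[of 1 "Suc n"] by simp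
  then obtain l where l: "(\<lambda>n. u (Suc n)) \<longlonglongrightarrow> l" "\<And>n. u (Suc n) \<le> l"
    using incseq_convergent[OF inc] by blast
  then have lim: "u \<longlonglongrightarrow> l"
    by (simp add: filterlim_sequentially_Suc)
  then show "convergent u"
    by (auto simp: convergent_def)
  fix R :: nat assume R: "1 \<le> R"
  have "u R \<le> l"
    using l(2)[of "R - 1"] R by simp
  moreover have "l \<le> u R + E / real R"
    using lim by (rule LIMSEQ_le_const2) (use rate[OF R] in auto)
  ultimately show "\<bar>lim u - u R\<bar> \<le> E / real R"
    using limI[OF lim] by simp
qed

lemma continuous_map_lim_rate:
  fixes u :: "'a \<Rightarrow> nat \<Rightarrow> real"
  assumes cont: "\<And>R. continuous_map X euclideanreal (\<lambda>x. u x R)"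
    and rate: "\<And>x R. x \<in> topspace X \<Longrightarrow> 1 \<le> R \<Longrightarrow> \<bar>lim (u x) - u x R\<bar> \<le> E / real R"
  shows "continuous_map X euclideanreal (\<lambda>x. lim (u x))"
proof -
  have "continuous_map X Met_TC.mtopology (\<lambda>x. lim (u x))"
  proof (rule Met_TC.continuous_map_uniform_limit[where F = sequentially and f = "\<lambda>R x. u x R"])
    fix \<epsilon> :: real assume "0 < \<epsilon>"
    then have "\<forall>\<^sub>F R in sequentially. E / real R < \<epsilon>"
      using order_tendstoD(2)[OF lim_const_over_n[of E]] by simp
    then show "\<forall>\<^sub>F R in sequentially. \<forall>x\<in>topspace X. lim (u x) \<in> UNIV \<and> dist (u x R) (lim (u x)) < \<epsilon>"
      using eventually_ge_at_top[of 1]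
    proof eventually_elim
      case (elim R)
      show ?case
      proof
        fix x assume "x \<in> topspace X"
        with rate[OF this elim(2)] elim(1)
        show "lim (u x) \<in> UNIV \<and> dist (u x R) (lim (u x)) < \<epsilon>"
          by (simp add: dist_real_def abs_minus_commute)
      qed
    qed
  qed (use cont in simp_all)
  then show ?thesis by simp
qed

lemma continuous_map_weak_topology_integral:
  assumes "continuous_on (Qcfg q) f" "bounded (f ` Qcfg q)"
  shows "continuous_map (weak_topology q) euclideanreal (\<lambda>L. \<integral>T. f T \<partial>L)"
  unfolding continuous_map_def
proof (intro conjI allI impI)
  fix U :: "real set" assume "openin euclideanreal U"
  then have "openin (weak_topology q) {L. (\<integral>T. f T \<partial>L) \<in> U}"
    unfolding weak_topology_def using assms by (intro topology_generated_by_Basis) auto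
  then show "openin (weak_topology q) {L \<in> topspace (weak_topology q). (\<integral>T. f T \<partial>L) \<in> U}"
    by (simp add: Collect_conj_eq openin_Int openin_topspace Int_commute)
qed simp

section \<open>Weighted series of log-means\<close>

locale log_mean_series =
  fixes q :: nat and A :: "nat \<Rightarrow> 'i set" and w :: "nat \<Rightarrow> real"
    and g :: "nat \<Rightarrow> 'i \<Rightarrow> (nat \<Rightarrow> nat) \<Rightarrow> real" and a b :: "nat \<Rightarrow> real"
  assumes finite_A: "\<And>k. finite (A k)" and w_nonneg: "\<And>k. 0 \<le> w k"
    and continuous_g: "\<And>k i. i \<in> A k \<Longrightarrow> continuous_on UNIV (g k i)"
    and a_pos: "\<And>k. 0 < a k"
    and g_ge: "\<And>k i \<tau>. i \<in> A k \<Longrightarrow> a k \<le> g k i \<tau>"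
    and g_le: "\<And>k i \<tau>. i \<in> A k \<Longrightarrow> g k i \<tau> \<le> b k"
    and summable_bound: "summable (\<lambda>k. w k * real (card (A k)) * (\<bar>ln (a k)\<bar> + \<bar>ln (b k)\<bar>))"
    and summable_error: "summable (\<lambda>k. w k * real (card (A k)) * ((b k)\<^sup>2 - (a k)\<^sup>2) / (a k)\<^sup>2)"
begin

definition log_term :: "nat \<Rightarrow> nat \<Rightarrow> cfg \<Rightarrow> real" where
  "log_term k R T = (\<Sum>i\<in>A k. w k * ln (row_mean (g k i) R T))"

definition log_series :: "nat \<Rightarrow> cfg \<Rightarrow> real" where
  "log_series R T = (\<Sum>k. log_term k R T)"

definition series_integral :: "cfg measure \<Rightarrow> nat \<Rightarrow> real" where
  "series_integral L R = (\<integral>T. log_series R T \<partial>L)"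

definition term_bound :: "nat \<Rightarrow> real" where
  "term_bound k = w k * real (card (A k)) * (\<bar>ln (a k)\<bar> + \<bar>ln (b k)\<bar>)"

definition term_error :: "nat \<Rightarrow> real" where
  "term_error k = w k * real (card (A k)) * ((b k)\<^sup>2 - (a k)\<^sup>2) / (a k)\<^sup>2"

lemma summable_term_bound: "summable term_bound"
  using summable_bound unfolding term_bound_def .

lemma summable_term_error: "summable term_error"
  using summable_error unfolding term_error_def .

lemma row_functional_of_term:
  "L \<in> Sstar q \<Longrightarrow> i \<in> A k \<Longrightarrow> bounded_row_functional q L (g k i) (a k) (b k)"
  using continuous_g a_pos g_ge g_le by unfold_locales auto

lemma abs_log_term_le: "\<bar>log_term k R T\<bar> \<le> term_bound k"
proof -
  have "\<bar>log_term k R T\<bar> \<le> (\<Sum>i\<in>A k. \<bar>w k * ln (row_mean (g k i) R T)\<bar>)"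
    unfolding log_term_def by (rule sum_abs)
  also have "\<dots> \<le> (\<Sum>i\<in>A k. w k * (\<bar>ln (a k)\<bar> + \<bar>ln (b k)\<bar>))"
  proof (rule sum_mono)
    fix i assume i: "i \<in> A k"
    have "\<bar>ln (row_mean (g k i) R T)\<bar> \<le> \<bar>ln (a k)\<bar> + \<bar>ln (b k)\<bar>"
      by (rule abs_ln_row_mean_le[OF a_pos g_ge[OF i] g_le[OF i]])
    then show "\<bar>w k * ln (row_mean (g k i) R T)\<bar> \<le> w k * (\<bar>ln (a k)\<bar> + \<bar>ln (b k)\<bar>)"
      using w_nonneg[of k] by (simp add: abs_mult mult_left_mono)
  qed
  also have "\<dots> = term_bound k"
    unfolding term_bound_def by simp
  finally show ?thesis .
qed

lemma summable_abs_log_term: "summable (\<lambda>k. \<bar>log_term k R T\<bar>)"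
  by (rule summable_comparison_test[OF _ summable_term_bound]) (simp add: abs_log_term_le)

lemma abs_log_series_le: "\<bar>log_series R T\<bar> \<le> (\<Sum>k. term_bound k)"
proof -
  have "\<bar>log_series R T\<bar> \<le> (\<Sum>k. \<bar>log_term k R T\<bar>)"
    unfolding log_series_def by (rule summable_rabs[OF summable_abs_log_term])
  also have "\<dots> \<le> (\<Sum>k. term_bound k)"
    by (rule suminf_le[OF abs_log_term_le summable_abs_log_term summable_term_bound])
  finally show ?thesis .
qed

lemma continuous_on_log_term: "continuous_on UNIV (log_term k R)"
proof (cases "R = 0")
  case False
  have "a k \<le> row_mean (g k i) R T" if "i \<in> A k" for i T
    using row_mean_bounds(1)[of R "a k" "g k i" "b k" T] g_ge[OF that] g_le[OF that] False by simp
  then have "\<forall>T\<in>UNIV. row_mean (g k i) R T \<noteq> 0" if "i \<in> A k" for i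
    using a_pos[of k] that by (metis less_le_trans less_irrefl)
  then show ?thesis
    unfolding log_term_def
    by (intro continuous_on_sum continuous_on_mult continuous_on_const continuous_on_ln
        continuous_on_row_mean continuous_g) auto
qed (simp add: log_term_def row_mean_def)

lemma continuous_on_log_series: "continuous_on UNIV (log_series R)"
proof -
  have "uniform_limit UNIV (\<lambda>n T. \<Sum>k<n. log_term k R T) (log_series R) sequentially"
    unfolding log_series_def[abs_def]
    by (rule Weierstrass_m_test[OF _ summable_term_bound]) (simp add: abs_log_term_le)
  then show ?thesis
    by (rule uniform_limit_theorem[rotated])
       (auto intro!: always_eventually continuous_on_sum continuous_on_log_term)
qed

lemma log_term_measurable[measurable]: "log_term k R \<in> borel_measurable borel"
  by (rule borel_measurable_continuous_onI[OF continuous_on_log_term])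

lemma continuous_map_series_integral:
  "continuous_map (weak_topology q) euclideanreal (\<lambda>L. series_integral L R)"
  unfolding series_integral_def
proof (rule continuous_map_weak_topology_integral)
  show "continuous_on (Qcfg q) (log_series R)"
    by (rule continuous_on_subset[OF continuous_on_log_series]) simp
  show "bounded (log_series R ` Qcfg q)"
    unfolding bounded_iff using abs_log_series_le by auto
qed

context
  fixes L assumes L: "L \<in> Sstar q"
begin

lemma integral_log_term:
  "(\<integral>T. log_term k R T \<partial>L) = (\<Sum>i\<in>A k. w k * bounded_row_functional.mean_log L (g k i) R)"
  unfolding log_term_def
  using bounded_row_functional.integrable_ln_row_mean[OF row_functional_of_term[OF L]]
  by (simp add: integral_sum bounded_row_functional.mean_log_def[OF row_functional_of_term[OF L]])

lemma integrable_log_term: "integrable L (log_term k R)"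
  by (rule integrable_Sstar_bounded[OF L log_term_measurable abs_log_term_le])

lemma integral_abs_log_term_le: "(\<integral>T. \<bar>log_term k R T\<bar> \<partial>L) \<le> term_bound k"
  using integrable_log_term abs_log_term_le
  by (intro prob_space.integral_le_const[OF Sstar_prob_space[OF L]]) auto

lemma summable_integral_log_term: "summable (\<lambda>k. \<integral>T. log_term k R T \<partial>L)"
  by (rule summable_comparison_test[OF _ summable_term_bound])
     (use order_trans[OF integral_abs_bound integral_abs_log_term_le] in simp)

lemma series_integral_eq_suminf: "series_integral L R = (\<Sum>k. \<integral>T. log_term k R T \<partial>L)"
  unfolding series_integral_def log_series_def
proof (rule integral_suminf[OF integrable_log_term])
  show "AE T in L. summable (\<lambda>k. norm (log_term k R T))"
    using summable_abs_log_term by simp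
  show "summable (\<lambda>k. \<integral>T. norm (log_term k R T) \<partial>L)"
    by (rule summable_comparison_test[OF _ summable_term_bound])
       (use integral_abs_log_term_le order_trans[OF abs_ge_zero] in \<open>simp add: integral_nonneg_AE\<close>)
qed

lemma series_integral_mono:
  assumes R: "1 \<le> R"
  shows "series_integral L R \<le> series_integral L (Suc R)"
  unfolding series_integral_eq_suminf
proof (rule suminf_le[OF _ summable_integral_log_term summable_integral_log_term])
  fix k
  show "(\<integral>T. log_term k R T \<partial>L) \<le> (\<integral>T. log_term k (Suc R) T \<partial>L)"
    unfolding integral_log_term
    using bounded_row_functional.mean_log_mono[OF row_functional_of_term[OF L] R] w_nonneg
    by (intro sum_mono mult_left_mono) auto
qed

lemma integral_log_term_le:
  assumes R: "1 \<le> R" "R \<le> R'"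
  shows "(\<integral>T. log_term k R' T \<partial>L) \<le> (\<integral>T. log_term k R T \<partial>L) + term_error k / real R"
proof -
  have "(\<integral>T. log_term k R' T \<partial>L)
      \<le> (\<Sum>i\<in>A k. w k * (bounded_row_functional.mean_log L (g k i) R
                           + ((b k)\<^sup>2 - (a k)\<^sup>2) / ((a k)\<^sup>2 * real R)))"
    unfolding integral_log_term
    using bounded_row_functional.mean_log_le[OF row_functional_of_term[OF L] R] w_nonneg
    by (intro sum_mono mult_left_mono) auto
  also have "\<dots> = (\<integral>T. log_term k R T \<partial>L) + term_error k / real R"
    unfolding integral_log_term term_error_def by (simp add: sum.distrib distrib_left)
  finally show ?thesis .
qed

lemma series_integral_le:
  assumes R: "1 \<le> R" "R \<le> R'"
  shows "series_integral L R' \<le> series_integral L R + (\<Sum>k. term_error k) / real R"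
proof -
  have summable: "summable (\<lambda>k. term_error k / real R)"
    by (rule summable_divide[OF summable_term_error])
  have "series_integral L R' \<le> (\<Sum>k. (\<integral>T. log_term k R T \<partial>L) + term_error k / real R)"
    unfolding series_integral_eq_suminf
    by (intro suminf_le integral_log_term_le[OF R] summable_add summable_integral_log_term summable)
  also have "\<dots> = series_integral L R + (\<Sum>k. term_error k) / real R"
    unfolding series_integral_eq_suminf
    using suminf_add[OF summable_integral_log_term summable] suminf_divide[OF summable_term_error]
    by simp
  finally show ?thesis .
qed

end

lemma series_integral_convergent_continuous:
  shows "\<forall>L\<in>Sstar q. convergent (series_integral L)"
    and "continuous_map (subtopology (weak_topology q) (Sstar q)) euclideanreal (\<lambda>L. lim (series_integral L))"
proof -
  have limit: "convergent (series_integral L)"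
    "\<And>R. 1 \<le> R \<Longrightarrow> \<bar>lim (series_integral L) - series_integral L R\<bar> \<le> (\<Sum>k. term_error k) / real R"
    if "L \<in> Sstar q" for L
    using convergent_mono_rate[OF series_integral_mono[OF that] series_integral_le[OF that]] by auto
  show "\<forall>L\<in>Sstar q. convergent (series_integral L)"
    using limit(1) by blast
  show "continuous_map (subtopology (weak_topology q) (Sstar q)) euclideanreal (\<lambda>L. lim (series_integral L))"
    using limit(2) continuous_map_from_subtopology[OF continuous_map_series_integral]
    by (intro continuous_map_lim_rate[where E = "\<Sum>k. term_error k"]) auto
qed

end

section \<open>The two functionals\<close>

lemma kdelta_bounds: "0 \<le> kdelta x y" "kdelta x y \<le> 1"
  by (auto simp: kdelta_def)

lemma continuous_on_kdelta_const: "continuous_on UNIV (\<lambda>\<tau>::nat \<Rightarrow> nat. kdelta (\<tau> i) x)"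
  by (rule continuous_on_compose2[OF Topological_Spaces.continuous_on_discrete[of UNIV "\<lambda>y. kdelta y x"]
        continuous_on_product_coordinates]) simp

lemma continuous_on_kdelta: "continuous_on UNIV (\<lambda>\<tau>::nat \<Rightarrow> nat. kdelta (\<tau> i) (\<tau> j))"
proof -
  have "open (S :: (nat \<times> nat) set)" for S
  proof -
    have "open ({fst p} \<times> {snd p})" for p :: "nat \<times> nat"
      by (intro open_Times discrete_topology_class.open_discrete)
    moreover have S: "S = (\<Union>p\<in>S. {fst p} \<times> {snd p})"
      by auto
    ultimately show ?thesis
      by (subst S) (intro open_UN ballI)
  qed
  then have "continuous_on UNIV (\<lambda>p :: nat \<times> nat. kdelta (fst p) (snd p))"
    by (simp add: continuous_on_open_vimage)
  from continuous_on_compose2[OF this continuous_on_Pair[OF continuous_on_product_coordinates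
        continuous_on_product_coordinates]]
  show ?thesis by simp
qed

lemma summable_poisson_power: "summable (\<lambda>k. poisson m k * x ^ k)"
proof -
  have "(\<lambda>k. poisson m k * x ^ k) = (\<lambda>k. exp (- m) * (inverse (fact k) * (m * x) ^ k))"
    by (simp add: poisson_def power_mult_distrib divide_inverse ac_simps)
  then show ?thesis
    using summable_mult[OF summable_exp[of "m * x"], of "exp (- m)"] by simp
qed

lemma poisson_nonneg: "0 \<le> m \<Longrightarrow> 0 \<le> poisson m k"
  by (simp add: poisson_def)

lemma summable_poisson_linear:
  assumes "0 \<le> m"
  shows "summable (\<lambda>k. poisson m k * (\<alpha> + \<gamma> * real k))"
proof -
  have "norm (poisson m k * real k) \<le> poisson m k * 2 ^ k" for k
  proof -
    have "real k \<le> 2 ^ k"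
      using of_nat_less_two_power[of k, where 'a = real] by linarith
    then show ?thesis
      using poisson_nonneg[OF assms, of k] by (simp add: abs_mult mult_left_mono)
  qed
  then have "summable (\<lambda>k. poisson m k * real k)"
    by (intro summable_comparison_test[OF _ summable_poisson_power]) auto
  then have "summable (\<lambda>k. \<alpha> * (poisson m k * 1 ^ k) + \<gamma> * (poisson m k * real k))"
    by (intro summable_add summable_mult summable_poisson_power)
  then show ?thesis
    by (simp add: algebra_simps)
qed

lemma summable_poisson_abs_ln:
  assumes m: "0 \<le> m" and \<beta>: "0 \<le> \<beta>" and Q: "1 \<le> Q"
  shows "summable (\<lambda>k. poisson m k * (\<bar>ln (Q * exp (- \<beta> * real k))\<bar> + \<bar>ln Q\<bar>))"
proof (rule summable_comparison_test[OF _ summable_poisson_linear[OF m, of "2 * ln Q" \<beta>]], intro exI allI impI)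
  fix k :: nat
  have "\<bar>ln (Q * exp (- \<beta> * real k))\<bar> + \<bar>ln Q\<bar> \<le> 2 * ln Q + \<beta> * real k"
    using Q \<beta> by (simp add: ln_mult abs_le_iff)
  moreover have "0 \<le> poisson m k"
    using m by (simp add: poisson_def)
  ultimately show "norm (poisson m k * (\<bar>ln (Q * exp (- \<beta> * real k))\<bar> + \<bar>ln Q\<bar>))
      \<le> poisson m k * (2 * ln Q + \<beta> * real k)"
    by (simp add: abs_mult mult_left_mono)
qed

lemma summable_poisson_sq_ratio:
  assumes Q: "0 < Q"
  shows "summable (\<lambda>k. poisson m k * (Q\<^sup>2 - (Q * exp (- \<beta> * real k))\<^sup>2) / (Q * exp (- \<beta> * real k))\<^sup>2)"
proof -
  have "poisson m k * (Q\<^sup>2 - (Q * exp (- \<beta> * real k))\<^sup>2) / (Q * exp (- \<beta> * real k))\<^sup>2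
      = poisson m k * (exp \<beta> ^ 2) ^ k - poisson m k * 1 ^ k" for k
  proof -
    define E where "E = exp (\<beta> * real k)"
    have inverse: "exp (- \<beta> * real k) = inverse E"
      by (simp add: E_def exp_minus)
    have power: "(exp \<beta> ^ 2) ^ k = E\<^sup>2"
      unfolding E_def by (simp add: mult.commute flip: power_mult exp_of_nat_mult)
    have "0 < E"
      by (simp add: E_def)
    then show ?thesis
      unfolding inverse power using Q by (simp add: field_simps power_mult_distrib)
  qed
  moreover have "summable (\<lambda>k. poisson m k * (exp \<beta> ^ 2) ^ k - poisson m k * 1 ^ k)"
    by (intro summable_diff summable_poisson_power)
  ultimately show ?thesis
    by simp
qed

lemma G1_convergent_continuous:
  fixes q N :: nat and \<beta> c :: real
  assumes q: "q \<ge> 2" and \<beta>: "\<beta> \<ge> 0" and c: "c \<ge> 0" and N: "N \<ge> 1"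
  shows "\<forall>L \<in> Sstar q. convergent (\<lambda>R. G1 q N R \<beta> c L)"
    and "continuous_map (subtopology (weak_topology q) (Sstar q)) euclideanreal
        (\<lambda>L. lim (\<lambda>R. G1 q N R \<beta> c L))"
proof -
  define m where "m = c * real N"
  define A where "A k = PiE {..<k} (\<lambda>_. {1..N})" for k :: nat
  define \<Sigma> where "\<Sigma> = PiE {1..N} (\<lambda>_. {1..q})"
  define w where "w k = poisson m k * (1 / real N ^ k) * (1 / real N)" for k
  define g where "g k I \<tau> = (\<Sum>\<sigma>\<in>\<Sigma>. exp (- \<beta> * Hamil k I \<tau> \<sigma>))" for k I \<tau>
  define Q where "Q = real q ^ N"
  have m: "0 \<le> m" unfolding m_def using c by simp
  have Q: "1 \<le> Q" and card_\<Sigma>: "real (card \<Sigma>) = Q"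
    using q by (simp_all add: Q_def \<Sigma>_def card_PiE)
  have w_card: "w k * real (card (A k)) = poisson m k / real N" for k
    using N by (simp add: w_def A_def card_PiE field_simps)
  have Hamil: "0 \<le> Hamil k I \<tau> \<sigma>" "Hamil k I \<tau> \<sigma> \<le> real k" for k I \<tau> \<sigma>
    using sum_mono[of "{..<k}" "\<lambda>i. kdelta (\<tau> i) (\<sigma> (I i))" "\<lambda>_. 1"]
    unfolding Hamil_def by (auto intro: sum_nonneg simp: kdelta_bounds)
  interpret log_mean_series q A w g "\<lambda>k. Q * exp (- \<beta> * real k)" "\<lambda>k. Q"
  proof
    show "finite (A k)" for k
      unfolding A_def by (intro finite_PiE) auto
    show "0 \<le> w k" for k
      using poisson_nonneg[OF m] by (simp add: w_def)
    show "continuous_on UNIV (g k I)" for k I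
      unfolding g_def Hamil_def by (intro continuous_intros continuous_on_kdelta_const)
    show "0 < Q * exp (- \<beta> * real k)" for k
      using Q by simp
    show "Q * exp (- \<beta> * real k) \<le> g k I \<tau>" for k I \<tau>
      using sum_mono[of \<Sigma> "\<lambda>_. exp (- \<beta> * real k)" "\<lambda>\<sigma>. exp (- \<beta> * Hamil k I \<tau> \<sigma>)"] Hamil \<beta> card_\<Sigma>
      unfolding g_def by (simp add: mult_left_mono)
    show "g k I \<tau> \<le> Q" for k I \<tau>
      using sum_mono[of \<Sigma> "\<lambda>\<sigma>. exp (- \<beta> * Hamil k I \<tau> \<sigma>)" "\<lambda>_. 1"] Hamil \<beta> card_\<Sigma>
      unfolding g_def by simp
    show "summable (\<lambda>k. w k * real (card (A k)) * (\<bar>ln (Q * exp (- \<beta> * real k))\<bar> + \<bar>ln Q\<bar>))"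
      using summable_divide[OF summable_poisson_abs_ln[OF m \<beta> Q], of "real N"] by (simp add: w_card)
    show "summable (\<lambda>k. w k * real (card (A k)) * (Q\<^sup>2 - (Q * exp (- \<beta> * real k))\<^sup>2)
        / (Q * exp (- \<beta> * real k))\<^sup>2)"
      using summable_divide[OF summable_poisson_sq_ratio, of Q m \<beta> "real N"] Q
      by (simp add: w_card mult.commute)
  qed
  have "G1 q N R \<beta> c L = series_integral L R" for L R
    unfolding G1_def series_integral_def log_series_def log_term_def row_mean_def
    by (intro arg_cong[where f = "integral\<^sup>L L"] ext suminf_cong)
       (simp add: A_def w_def g_def \<Sigma>_def m_def sum_distrib_left mult.assoc)
  then show "\<forall>L \<in> Sstar q. convergent (\<lambda>R. G1 q N R \<beta> c L)"
    and "continuous_map (subtopology (weak_topology q) (Sstar q)) euclideanreal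
        (\<lambda>L. lim (\<lambda>R. G1 q N R \<beta> c L))"
    using series_integral_convergent_continuous by simp_all
qed

lemma G2_convergent_continuous:
  fixes q N :: nat and \<beta> c :: real
  assumes \<beta>: "\<beta> \<ge> 0" and c: "c \<ge> 0" and N: "N \<ge> 1"
  shows "\<forall>L \<in> Sstar q. convergent (\<lambda>R. G2 N R \<beta> c L)"
    and "continuous_map (subtopology (weak_topology q) (Sstar q)) euclideanreal
        (\<lambda>L. lim (\<lambda>R. G2 N R \<beta> c L))"
proof -
  define m where "m = c * real N / 2"
  define S where "S K \<tau> = (\<Sum>k<K. kdelta (\<tau> (2 * k)) (\<tau> (2 * k + 1)))" for K and \<tau> :: "nat \<Rightarrow> nat"
  have m: "0 \<le> m" unfolding m_def using c by simp
  have S: "0 \<le> S K \<tau>" "S K \<tau> \<le> real K" for K \<tau>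
    using sum_mono[of "{..<K}" "\<lambda>k. kdelta (\<tau> (2 * k)) (\<tau> (2 * k + 1))" "\<lambda>_. 1"]
    unfolding S_def by (auto intro: sum_nonneg simp: kdelta_bounds)
  interpret log_mean_series q "\<lambda>K. {()}" "\<lambda>K. poisson m K / real N"
    "\<lambda>K i \<tau>. exp (- \<beta> * S K \<tau>)" "\<lambda>K. 1 * exp (- \<beta> * real K)" "\<lambda>K. 1"
  proof
    show "0 \<le> poisson m k / real N" for k
      using poisson_nonneg[OF m] by simp
    show "continuous_on UNIV (\<lambda>\<tau>. exp (- \<beta> * S k \<tau>))" for k
      unfolding S_def by (intro continuous_intros continuous_on_kdelta)
    show "1 * exp (- \<beta> * real k) \<le> exp (- \<beta> * S k \<tau>)" for k \<tau>
      using S(2)[of k \<tau>] \<beta> by (simp add: mult_left_mono)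
    show "exp (- \<beta> * S k \<tau>) \<le> 1" for k \<tau>
      using S(1)[of k \<tau>] \<beta> by simp
    show "summable (\<lambda>k. poisson m k / real N * real (card {()})
        * (\<bar>ln (1 * exp (- \<beta> * real k))\<bar> + \<bar>ln 1\<bar>))"
      using summable_divide[OF summable_poisson_abs_ln[OF m \<beta> order_refl], of "real N"] by simp
    show "summable (\<lambda>k. poisson m k / real N * real (card {()}) * (1\<^sup>2 - (1 * exp (- \<beta> * real k))\<^sup>2)
        / (1 * exp (- \<beta> * real k))\<^sup>2)"
      using summable_divide[OF summable_poisson_sq_ratio, of 1 m \<beta> "real N"]
      by (simp add: mult.commute)
  qed simp_all
  have "G2 N R \<beta> c L = series_integral L R" for L R
    unfolding G2_def series_integral_def log_series_def log_term_def row_mean_def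
    by (simp add: m_def S_def)
  then show "\<forall>L \<in> Sstar q. convergent (\<lambda>R. G2 N R \<beta> c L)"
    and "continuous_map (subtopology (weak_topology q) (Sstar q)) euclideanreal
        (\<lambda>L. lim (\<lambda>R. G2 N R \<beta> c L))"
    using series_integral_convergent_continuous by simp_all
qed

theorem mainTheorem14:
  fixes q N :: nat and \<beta> c :: real
  assumes "q \<ge> 2" and "\<beta> \<ge> 0" and "c \<ge> 0" and "N \<ge> 1"
  shows "(\<forall>L \<in> Sstar q. convergent (\<lambda>R. G1 q N R \<beta> c L) \<and> convergent (\<lambda>R. G2 N R \<beta> c L))
    \<and> continuous_map (subtopology (weak_topology q) (Sstar q)) euclideanreal
        (\<lambda>L. lim (\<lambda>R. G1 q N R \<beta> c L))
    \<and> continuous_map (subtopology (weak_topology q) (Sstar q)) euclideanreal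
        (\<lambda>L. lim (\<lambda>R. G2 N R \<beta> c L))"
  using G1_convergent_continuous[OF assms] G2_convergent_continuous[OF assms(2-4), of q] by blast

end
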